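(* Let $(X,d,f)$ be a dynamical system and $\mathcal{A}=\{\mathcal{U}_n\}_{n\in\mathbb{N}}$ a tame defining sequence of $(X,d)$. Then $f$ has the finite shadowing property if and only if for every $m\in\mathbb{N}$ there is $n>m$ such that $\mathcal{PO}(\mathcal{U}_n)\hookrightarrow\mathcal{O}(\mathcal{U}_m)$, i.e. for every $(O_i)\in\mathcal{PO}(\mathcal{U}_n)$ the unique $(V_i)\in\mathcal{U}_m^{\mathbb{N}}$ with $O_i\subseteq V_i$ for all $i$ belongs to $\mathcal{O}(\mathcal{U}_m)$.
   Context: Spaces are nonempty separable metrizable; $d$ is admissible and $f$ continuous. A partition is a cover by pairwise disjoint nonempty clopen sets. A defining sequence is a sequence $\{\mathcal{U}_n\}$ of partitions, each refining the previous, whose union is a basis; tame if $\sup\{\operatorname{diam}O:O\in\mathcal{U}_n\}\to0$ and for each $n$ there is $\rho_n>0$ such that points in distinct elements of $\mathcal{U}_n$ have distance $\ge\rho_n$. $\mathcal{O}(\mathcal{U})=\{(O_i)\in\mathcal{U}^{\mathbb{N}}:\forall k\ \exists x,\ f^i(x)\in O_i\ (0\le i\le k)\}$; $\mathcal{PO}(\mathcal{U})=\{(O_i)\in\mathcal{U}^{\mathbb{N}}: f(O_i)\cap O_{i+1}\ne\emptyset\ \forall i\}$. Finite shadowing property: for every $\varepsilon>0$ there is $\delta>0$ such that every finite sequence $(x_i)_{i=0}^k$ with $d(f(x_i),x_{i+1})<\delta$ admits $z$ with $d(f^i(z),x_i)<\varepsilon$ for $0\le i\le k$. *)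

theory Defs
  imports "HOL-Analysis.Analysis"
begin

text \<open>Dynamical system (X,d,f): X a nonempty separable subset of a metric space
  (metric = dist restricted to X), f a continuous self-map of X.\<close>
definition dyn_system :: "'a::metric_space set \<Rightarrow> ('a \<Rightarrow> 'a) \<Rightarrow> bool" where
  "dyn_system X f \<longleftrightarrow> X \<noteq> {} \<and> (\<exists>C. countable C \<and> C \<subseteq> X \<and> X \<subseteq> closure C)
     \<and> continuous_on X f \<and> f ` X \<subseteq> X"

definition is_partition :: "'a::topological_space set \<Rightarrow> 'a set set \<Rightarrow> bool" where
  "is_partition X P \<longleftrightarrow> \<Union>P = X
     \<and> (\<forall>A\<in>P. A \<noteq> {} \<and> openin (top_of_set X) A \<and> closedin (top_of_set X) A)
     \<and> (\<forall>A\<in>P. \<forall>B\<in>P. A \<noteq> B \<longrightarrow> A \<inter> B = {})"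

definition refines :: "'a set set \<Rightarrow> 'a set set \<Rightarrow> bool" where
  "refines P Q \<longleftrightarrow> (\<forall>A\<in>P. \<exists>V\<in>Q. A \<subseteq> V)"

definition defining_sequence :: "'a::topological_space set \<Rightarrow> (nat \<Rightarrow> 'a set set) \<Rightarrow> bool" where
  "defining_sequence X U \<longleftrightarrow> (\<forall>n. is_partition X (U n))
     \<and> (\<forall>n. refines (U (Suc n)) (U n))
     \<and> (\<forall>W. openin (top_of_set X) W \<longrightarrow> (\<forall>x\<in>W. \<exists>n. \<exists>A\<in>U n. x \<in> A \<and> A \<subseteq> W))"

definition tame_defining_sequence :: "'a::metric_space set \<Rightarrow> (nat \<Rightarrow> 'a set set) \<Rightarrow> bool" where
  "tame_defining_sequence X U \<longleftrightarrow> defining_sequence X U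
     \<and> (\<forall>\<epsilon>>0. \<exists>N. \<forall>n\<ge>N. \<forall>A\<in>U n. \<forall>x\<in>A. \<forall>y\<in>A. dist x y \<le> \<epsilon>)
     \<and> (\<forall>n. \<exists>\<rho>>0. \<forall>A\<in>U n. \<forall>B\<in>U n. A \<noteq> B \<longrightarrow>
            (\<forall>x\<in>A. \<forall>y\<in>B. dist x y \<ge> \<rho>))"

definition orbit_seqs :: "'a set \<Rightarrow> ('a \<Rightarrow> 'a) \<Rightarrow> 'a set set \<Rightarrow> (nat \<Rightarrow> 'a set) set" where
  "orbit_seqs X f P = {A. (\<forall>i. A i \<in> P) \<and>
     (\<forall>k. \<exists>x\<in>X. \<forall>i\<le>k. (f ^^ i) x \<in> A i)}"

definition pseudo_orbit_seqs :: "('a \<Rightarrow> 'a) \<Rightarrow> 'a set set \<Rightarrow> (nat \<Rightarrow> 'a set) set" where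
  "pseudo_orbit_seqs f P = {A. (\<forall>i. A i \<in> P) \<and> (\<forall>i. f ` (A i) \<inter> A (Suc i) \<noteq> {})}"

definition finite_shadowing :: "'a::metric_space set \<Rightarrow> ('a \<Rightarrow> 'a) \<Rightarrow> bool" where
  "finite_shadowing X f \<longleftrightarrow> (\<forall>\<epsilon>>0. \<exists>\<delta>>0. \<forall>k (x::nat \<Rightarrow> 'a).
     (\<forall>i\<le>k. x i \<in> X) \<and> (\<forall>i<k. dist (f (x i)) (x (Suc i)) < \<delta>) \<longrightarrow>
     (\<exists>z\<in>X. \<forall>i\<le>k. dist ((f ^^ i) z) (x i) < \<epsilon>))"

end

theory Submission
  imports Defs
begin

text \<open>Everything rests on the uniform separation of the cells of U_n: a point of X closer than
  \<rho>_n to a cell of U_n lies in that cell. If \<delta> shadows pseudo-orbits within \<rho>_m and the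
  cells of U_n have diameter < \<delta>, points chosen along a pseudo-orbit sequence of U_n form a
  \<delta>-pseudo-orbit, and a shadowing orbit stays in the same cells of U_m. Conversely, a
  \<rho>_n-pseudo-orbit, continued by its own forward orbit, runs through a pseudo-orbit sequence
  of U_n; an orbit following the coarser cells of U_N then \<epsilon>-shadows it once the cells of U_N
  have diameter < \<epsilon>.\<close>

definition cells_separated :: "real \<Rightarrow> 'a::metric_space set set \<Rightarrow> bool" where
  "cells_separated \<rho> P \<longleftrightarrow> (\<forall>A\<in>P. \<forall>B\<in>P. A \<noteq> B \<longrightarrow> (\<forall>x\<in>A. \<forall>y\<in>B. \<rho> \<le> dist x y))"

definition cells_small :: "real \<Rightarrow> 'a::metric_space set set \<Rightarrow> bool" where
  "cells_small \<epsilon> P \<longleftrightarrow> (\<forall>A\<in>P. \<forall>x\<in>A. \<forall>y\<in>A. dist x y < \<epsilon>)"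

definition shadows :: "'a::metric_space set \<Rightarrow> ('a \<Rightarrow> 'a) \<Rightarrow> real \<Rightarrow> real \<Rightarrow> bool" where
  "shadows X f \<delta> \<epsilon> \<longleftrightarrow> (\<forall>k (x::nat \<Rightarrow> 'a).
     (\<forall>i\<le>k. x i \<in> X) \<and> (\<forall>i<k. dist (f (x i)) (x (Suc i)) < \<delta>) \<longrightarrow>
     (\<exists>z\<in>X. \<forall>i\<le>k. dist ((f ^^ i) z) (x i) < \<epsilon>))"

definition pseudo_orbit_seqs_embed ::
    "'a set \<Rightarrow> ('a \<Rightarrow> 'a) \<Rightarrow> 'a set set \<Rightarrow> 'a set set \<Rightarrow> bool" where
  "pseudo_orbit_seqs_embed X f Q P \<longleftrightarrow> (\<forall>A\<in>pseudo_orbit_seqs f Q. \<forall>V.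
     (\<forall>i. V i \<in> P \<and> A i \<subseteq> V i) \<longrightarrow> V \<in> orbit_seqs X f P)"

lemma finite_shadowing_iff_shadows:
  "finite_shadowing X f \<longleftrightarrow> (\<forall>\<epsilon>>0. \<exists>\<delta>>0. shadows X f \<delta> \<epsilon>)"
  by (simp add: finite_shadowing_def shadows_def)

lemma funpow_mem:
  assumes "f ` X \<subseteq> X" "x \<in> X"
  shows "(f ^^ i) x \<in> X"
  using assms by (induction i) auto

lemma cells_separated_mem_cell:
  assumes "cells_separated \<rho> P" "y \<in> \<Union>P" "x \<in> B" "B \<in> P" "dist y x < \<rho>"
  shows "y \<in> B"
proof -
  obtain W where "W \<in> P" "y \<in> W" using assms(2) by blast
  with assms show ?thesis
    unfolding cells_separated_def by (metis linorder_not_less)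
qed

lemma defining_sequence_Union:
  "defining_sequence X U \<Longrightarrow> \<Union>(U n) = X"
  by (simp add: defining_sequence_def is_partition_def)

lemma tame_defining_sequence_Union:
  "tame_defining_sequence X U \<Longrightarrow> \<Union>(U n) = X"
  by (simp add: tame_defining_sequence_def defining_sequence_Union)

lemma defining_sequence_refines:
  assumes "defining_sequence X U" "m \<le> n"
  shows "refines (U n) (U m)"
  using assms(2)
proof (induction n rule: dec_induct)
  case base
  show ?case by (auto simp: refines_def)
next
  case (step n)
  have "refines (U (Suc n)) (U n)"
    using assms(1) by (simp add: defining_sequence_def)
  with step.IH show ?case
    unfolding refines_def by (meson order_trans)
qed

lemma tame_defining_sequence_cells_small:
  assumes "tame_defining_sequence X U" "\<epsilon> > 0"
  obtains N where "\<And>n. N \<le> n \<Longrightarrow> cells_small \<epsilon> (U n)"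
proof -
  obtain N where "\<forall>n\<ge>N. \<forall>A\<in>U n. \<forall>x\<in>A. \<forall>y\<in>A. dist x y \<le> \<epsilon>/2"
    using assms by (meson half_gt_zero tame_defining_sequence_def)
  then have "cells_small \<epsilon> (U n)" if "N \<le> n" for n
    using that \<open>\<epsilon> > 0\<close> unfolding cells_small_def by fastforce
  then show thesis by (rule that)
qed

lemma tame_defining_sequence_separated:
  assumes "tame_defining_sequence X U"
  obtains \<rho> where "\<rho> > 0" "cells_separated \<rho> (U n)"
proof -
  have "\<exists>\<rho>>0. cells_separated \<rho> (U n)"
    using assms unfolding tame_defining_sequence_def cells_separated_def by simp
  then show thesis using that by blast
qed

lemma pseudo_orbit_seqs_points:
  assumes "A \<in> pseudo_orbit_seqs f P"
  obtains y where "\<And>i. y i \<in> A i" "\<And>i. f (y i) \<in> A (Suc i)"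
proof -
  have "\<forall>i. \<exists>y. y \<in> A i \<and> f y \<in> A (Suc i)"
    using assms unfolding pseudo_orbit_seqs_def by blast
  then show thesis using that by metis
qed

lemma finite_pseudo_orbit_extend:
  assumes "f ` X \<subseteq> X" "\<delta> > 0" "\<forall>i\<le>k. x i \<in> X" "\<forall>i<k. dist (f (x i)) (x (Suc i)) < \<delta>"
  obtains p where "\<And>i. p i \<in> X" "\<And>i. i \<le> k \<Longrightarrow> p i = x i"
    "\<And>i. dist (f (p i)) (p (Suc i)) < \<delta>"
proof
  define p where "p i = (if i \<le> k then x i else (f ^^ (i - k)) (x k))" for i
  show "p i \<in> X" for i
    unfolding p_def using assms(3) funpow_mem[OF assms(1)] by auto
  show "p i = x i" if "i \<le> k" for i
    using that by (simp add: p_def)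
  show "dist (f (p i)) (p (Suc i)) < \<delta>" for i
  proof (cases "i < k")
    case True
    then show ?thesis using assms(4) by (simp add: p_def)
  next
    case False
    then have "p (Suc i) = f (p i)"
      by (auto simp: p_def Suc_diff_le le_Suc_eq)
    then show ?thesis using assms(2) by simp
  qed
qed

lemma orbit_seqs_if_shadowed:
  assumes "f ` X \<subseteq> X" "\<Union>P = X" "cells_separated \<rho> P" "\<And>i. V i \<in> P" "\<And>i. y i \<in> V i"
    and shadow: "\<And>k. \<exists>z\<in>X. \<forall>i\<le>k. dist ((f ^^ i) z) (y i) < \<rho>"
  shows "V \<in> orbit_seqs X f P"
  unfolding orbit_seqs_def
proof (intro CollectI conjI allI)
  fix k
  obtain z where z: "z \<in> X" "\<forall>i\<le>k. dist ((f ^^ i) z) (y i) < \<rho>"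
    using shadow by blast
  have "(f ^^ i) z \<in> V i" if "i \<le> k" for i
  proof -
    have "(f ^^ i) z \<in> \<Union>P"
      using funpow_mem[OF assms(1) z(1)] assms(2) by simp
    then show ?thesis
      using cells_separated_mem_cell[OF assms(3) _ assms(5,4)] z(2) that by simp
  qed
  then show "\<exists>x\<in>X. \<forall>i\<le>k. (f ^^ i) x \<in> V i" using z(1) by blast
qed (use assms(4) in blast)

lemma pseudo_orbit_seqs_if_close:
  assumes "f ` X \<subseteq> X" "\<Union>P = X" "cells_separated \<rho> P"
    and "\<And>i. p i \<in> X" "\<And>i. dist (f (p i)) (p (Suc i)) < \<rho>"
    and "\<And>i. A i \<in> P" "\<And>i. p i \<in> A i"
  shows "A \<in> pseudo_orbit_seqs f P"
proof -
  have "f ` A i \<inter> A (Suc i) \<noteq> {}" for i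
  proof -
    have "f (p i) \<in> \<Union>P"
      using assms(1,4) unfolding assms(2) by (simp add: image_subset_iff)
    then have "f (p i) \<in> A (Suc i)"
      by (rule cells_separated_mem_cell[OF assms(3) _ assms(7,6) assms(5)])
    then show ?thesis
      using assms(7) by blast
  qed
  then show ?thesis
    unfolding pseudo_orbit_seqs_def using assms(6) by simp
qed

lemma pseudo_orbit_seqs_embed_if_shadows:
  assumes "f ` X \<subseteq> X" "\<Union>P = X" "cells_separated \<rho> P" "shadows X f \<delta> \<rho>"
    and "\<Union>Q = X" "cells_small \<delta> Q"
  shows "pseudo_orbit_seqs_embed X f Q P"
  unfolding pseudo_orbit_seqs_embed_def
proof (intro ballI allI impI)
  fix A V
  assume A: "A \<in> pseudo_orbit_seqs f Q" and AV: "\<forall>i. V i \<in> P \<and> A i \<subseteq> V i"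
  obtain y where y: "\<And>i. y i \<in> A i" "\<And>i. f (y i) \<in> A (Suc i)"
    using pseudo_orbit_seqs_points[OF A] by blast
  have AQ: "A i \<in> Q" for i
    using A by (simp add: pseudo_orbit_seqs_def)
  then have yX: "y i \<in> X" for i
    using y(1) assms(5) by blast
  have "dist (f (y i)) (y (Suc i)) < \<delta>" for i
    using assms(6)[unfolded cells_small_def] AQ[of "Suc i"] y(2)[of i] y(1)[of "Suc i"] by blast
  then have shadow: "\<exists>z\<in>X. \<forall>i\<le>k. dist ((f ^^ i) z) (y i) < \<rho>" for k
    using assms(4)[unfolded shadows_def, rule_format, of k y] yX by blast
  have V: "\<And>i. V i \<in> P" "\<And>i. y i \<in> V i"
    using AV y(1) by blast+
  show "V \<in> orbit_seqs X f P"
    by (rule orbit_seqs_if_shadowed[OF assms(1-3) V shadow])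
qed

lemma shadows_if_pseudo_orbit_seqs_embed:
  assumes "f ` X \<subseteq> X" "\<Union>Q = X" "cells_separated \<rho> Q" "\<rho> > 0" "refines Q P" "cells_small \<epsilon> P"
    and "pseudo_orbit_seqs_embed X f Q P"
  shows "shadows X f \<rho> \<epsilon>"
  unfolding shadows_def
proof (intro allI impI)
  fix k and x :: "nat \<Rightarrow> 'a"
  assume "(\<forall>i\<le>k. x i \<in> X) \<and> (\<forall>i<k. dist (f (x i)) (x (Suc i)) < \<rho>)"
  then obtain p where p: "\<And>i. p i \<in> X" "\<And>i. i \<le> k \<Longrightarrow> p i = x i"
    "\<And>i. dist (f (p i)) (p (Suc i)) < \<rho>"
    using finite_pseudo_orbit_extend[OF assms(1,4)] by blast
  have "\<forall>i. \<exists>B\<in>Q. p i \<in> B"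
    using p(1) unfolding assms(2)[symmetric] by blast
  then obtain A where A: "\<And>i. A i \<in> Q" "\<And>i. p i \<in> A i"
    by metis
  have "\<forall>i. \<exists>B\<in>P. A i \<subseteq> B"
    using A(1) assms(5) unfolding refines_def by blast
  then obtain V where V: "\<And>i. V i \<in> P" "\<And>i. A i \<subseteq> V i"
    by metis
  have "A \<in> pseudo_orbit_seqs f Q"
    by (rule pseudo_orbit_seqs_if_close[where p = p and A = A, OF assms(1-3) p(1,3) A])
  then have "V \<in> orbit_seqs X f P"
    using assms(7) V unfolding pseudo_orbit_seqs_embed_def by simp
  then obtain z where z: "z \<in> X" "\<forall>i\<le>k. (f ^^ i) z \<in> V i"
    unfolding orbit_seqs_def by blast
  have "dist ((f ^^ i) z) (x i) < \<epsilon>" if "i \<le> k" for i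
  proof -
    have "x i \<in> V i"
      using A(2)[of i] V(2)[of i] p(2)[OF that] by auto
    moreover have "(f ^^ i) z \<in> V i"
      using z(2) that by simp
    ultimately show ?thesis
      using assms(6)[unfolded cells_small_def, rule_format, OF V(1)[of i]] by simp
  qed
  then show "\<exists>z\<in>X. \<forall>i\<le>k. dist ((f ^^ i) z) (x i) < \<epsilon>"
    using z(1) by blast
qed

lemma finite_shadowing_imp_pseudo_orbit_seqs_embed:
  assumes "f ` X \<subseteq> X" "tame_defining_sequence X U" "finite_shadowing X f"
  shows "\<exists>n>m. pseudo_orbit_seqs_embed X f (U n) (U m)"
proof -
  obtain \<rho> where "\<rho> > 0" "cells_separated \<rho> (U m)"
    using tame_defining_sequence_separated[OF assms(2)] by blast
  then obtain \<delta> where "\<delta> > 0" "shadows X f \<delta> \<rho>"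
    using assms(3) unfolding finite_shadowing_iff_shadows by blast
  then obtain N where "\<And>n. N \<le> n \<Longrightarrow> cells_small \<delta> (U n)"
    using tame_defining_sequence_cells_small[OF assms(2)] by blast
  then have "pseudo_orbit_seqs_embed X f (U (max N m + 1)) (U m)"
    using pseudo_orbit_seqs_embed_if_shadows[OF assms(1) tame_defining_sequence_Union[OF assms(2)]
        \<open>cells_separated \<rho> (U m)\<close> \<open>shadows X f \<delta> \<rho>\<close>
        tame_defining_sequence_Union[OF assms(2)]] by simp
  then show ?thesis by (intro exI[of _ "max N m + 1"]) simp
qed

lemma pseudo_orbit_seqs_embed_imp_finite_shadowing:
  assumes "f ` X \<subseteq> X" "tame_defining_sequence X U"
    and embed: "\<And>m. \<exists>n>m. pseudo_orbit_seqs_embed X f (U n) (U m)"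
  shows "finite_shadowing X f"
  unfolding finite_shadowing_iff_shadows
proof (intro allI impI)
  fix \<epsilon> :: real
  assume "\<epsilon> > 0"
  have ds: "defining_sequence X U"
    using assms(2) by (simp add: tame_defining_sequence_def)
  obtain N where small: "cells_small \<epsilon> (U N)"
    using tame_defining_sequence_cells_small[OF assms(2) \<open>\<epsilon> > 0\<close>] by blast
  obtain n where "N < n" and embed_N: "pseudo_orbit_seqs_embed X f (U n) (U N)"
    using embed by blast
  obtain \<rho> where "\<rho> > 0" "cells_separated \<rho> (U n)"
    using tame_defining_sequence_separated[OF assms(2)] by blast
  moreover have "refines (U n) (U N)"
    using defining_sequence_refines[OF ds] \<open>N < n\<close> by simp
  ultimately show "\<exists>\<delta>>0. shadows X f \<delta> \<epsilon>"
    using shadows_if_pseudo_orbit_seqs_embed[OF assms(1) tame_defining_sequence_Union[OF assms(2)]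
        _ _ _ small embed_N] by blast
qed

theorem proposition4p14:
  fixes X :: "'a::metric_space set" and f :: "'a \<Rightarrow> 'a" and U :: "nat \<Rightarrow> 'a set set"
  assumes "dyn_system X f"
    and "tame_defining_sequence X U"
  shows "finite_shadowing X f \<longleftrightarrow>
    (\<forall>m. \<exists>n>m. \<forall>A\<in>pseudo_orbit_seqs f (U n). \<forall>V.
        (\<forall>i. V i \<in> U m \<and> A i \<subseteq> V i) \<longrightarrow> V \<in> orbit_seqs X f (U m))"
proof -
  have "f ` X \<subseteq> X"
    using assms(1) by (simp add: dyn_system_def)
  then have "finite_shadowing X f \<longleftrightarrow> (\<forall>m. \<exists>n>m. pseudo_orbit_seqs_embed X f (U n) (U m))"
    using finite_shadowing_imp_pseudo_orbit_seqs_embed[OF _ assms(2)]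
      pseudo_orbit_seqs_embed_imp_finite_shadowing[OF _ assms(2)] by blast
  then show ?thesis
    by (simp only: pseudo_orbit_seqs_embed_def)
qed

end
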